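(* For every integer $n\ge 1$, $$\Delta_n=2^{-n}\,\frac{1}{2\pi i}\oint_C \mathbf{1}^{T}\,\frac{A(z)^{n-1}-A(1/z)^{n-1}}{1-z}\,\mathbf{1}\,dz,$$ where $A(z)=\begin{pmatrix}1 & 1/z\\ 1 & z\end{pmatrix}$, $\mathbf 1=(1,1)^T$, and $C$ is any positively oriented simple closed contour in $\mathbb C$ enclosing the origin (and not passing through $0$).
   Context: A fair coin is flipped $n$ times, producing a sequence $x_1,\dots,x_n\in\{H,T\}$ of independent uniformly random outcomes. Alice's score is the number of indices $i\in\{1,\dots,n-1\}$ with $(x_i,x_{i+1})=(H,H)$; Bob's score is the number of indices $i\in\{1,\dots,n-1\}$ with $(x_i,x_{i+1})=(H,T)$. Let $P_n(\mathrm{Bob})$ be the probability that Bob's score is strictly larger than Alice's, $P_n(\mathrm{Alice})$ the probability that Alice's score is strictly larger than Bob's, and $\Delta_n=P_n(\mathrm{Bob})-P_n(\mathrm{Alice})$. *)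

theory Defs
  imports "HOL-Complex_Analysis.Complex_Analysis"
begin

text \<open>Coin sequences of length n: lists of booleans, True = H, False = T.
  All 2^n sequences are equally likely.\<close>

definition alice_score :: "bool list \<Rightarrow> nat" where
  "alice_score x = card {i. i + 1 < length x \<and> x ! i \<and> x ! (i + 1)}"

definition bob_score :: "bool list \<Rightarrow> nat" where
  "bob_score x = card {i. i + 1 < length x \<and> x ! i \<and> \<not> x ! (i + 1)}"

definition coin_seqs :: "nat \<Rightarrow> bool list set" where
  "coin_seqs n = {x. length x = n}"

definition P_Bob :: "nat \<Rightarrow> real" where
  "P_Bob n = real (card {x \<in> coin_seqs n. bob_score x > alice_score x}) / 2 ^ n"

definition P_Alice :: "nat \<Rightarrow> real" where
  "P_Alice n = real (card {x \<in> coin_seqs n. alice_score x > bob_score x}) / 2 ^ n"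

definition Delta :: "nat \<Rightarrow> real" where
  "Delta n = P_Bob n - P_Alice n"

primrec matpow :: "'a::semiring_1 ^'n ^'n \<Rightarrow> nat \<Rightarrow> 'a ^'n ^'n" where
  "matpow M 0 = mat 1"
| "matpow M (Suc k) = M ** matpow M k"

definition Amat :: "complex \<Rightarrow> complex ^2 ^2" where
  "Amat z = vector [vector [1, 1 / z], vector [1, z]]"

definition ones2 :: "complex ^2" where
  "ones2 = vector [1, 1]"

end

theory Submission
  imports Defs
begin

text \<open>Let \<open>d(x)\<close> be Alice's score minus Bob's. Appending a coin to a sequence ending in T does not
  change \<open>d\<close>, while appending H resp. T to a sequence ending in H changes it by \<open>+1\<close> resp. \<open>-1\<close>.
  Hence, splitting the Laurent polynomial \<open>\<Sum>\<^sub>x z^d(x)\<close> over sequences of length \<open>k + 1\<close> by the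
  last coin, the vector of the two parts is \<open>A(z)\<^sup>k 1\<close>, and the integrand is
  \<open>\<Sum>\<^sub>x (z^d(x) - z^-d(x)) / (1 - z)\<close>. For \<open>d > 0\<close> the summand is \<open>-(z^-d + \<dots> + z^(d-1))\<close>,
  whose residue at 0 is \<open>-1\<close>, and symmetrically \<open>+1\<close> for \<open>d < 0\<close>; so the integral counts
  Bob's wins minus Alice's wins.\<close>

definition adjacent_count :: "('a \<Rightarrow> 'a \<Rightarrow> bool) \<Rightarrow> 'a list \<Rightarrow> nat" where
  "adjacent_count P x = card {i. i + 1 < length x \<and> P (x ! i) (x ! (i + 1))}"

lemma adjacent_count_snoc:
  "adjacent_count P (x @ [b]) = adjacent_count P x + (if x \<noteq> [] \<and> P (last x) b then 1 else 0)"
proof -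
  let ?S = "{i. i + 1 < length x \<and> P (x ! i) (x ! (i + 1))}"
  have split: "{i. i + 1 < length (x @ [b]) \<and> P ((x @ [b]) ! i) ((x @ [b]) ! (i + 1))} =
      ?S \<union> (if x \<noteq> [] \<and> P (last x) b then {length x - 1} else {})"
  proof (rule set_eqI)
    fix i
    consider "i + 1 < length x" | "i + 1 = length x" | "i + 1 > length x" by linarith
    then show "i \<in> {i. i + 1 < length (x @ [b]) \<and> P ((x @ [b]) ! i) ((x @ [b]) ! (i + 1))} \<longleftrightarrow>
        i \<in> ?S \<union> (if x \<noteq> [] \<and> P (last x) b then {length x - 1} else {})"
    proof cases
      case 2
      then have x: "x \<noteq> []" "i = length x - 1" by auto
      then have "x ! i = last x" by (simp add: last_conv_nth)
      with 2 x show ?thesis by (auto simp: nth_append)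
    qed (auto simp: nth_append)
  qed
  have "finite ?S" by (rule finite_subset[of _ "{..<length x}"]) auto
  moreover have "length x - 1 \<notin> ?S" by auto
  ultimately show ?thesis
    unfolding adjacent_count_def split by auto
qed

lemma alice_score_adjacent_count: "alice_score = adjacent_count (\<lambda>u v. u \<and> v)"
  by (simp add: fun_eq_iff alice_score_def adjacent_count_def)

lemma bob_score_adjacent_count: "bob_score = adjacent_count (\<lambda>u v. u \<and> \<not> v)"
  by (simp add: fun_eq_iff bob_score_def adjacent_count_def)

definition score_diff :: "bool list \<Rightarrow> int" where
  "score_diff x = int (alice_score x) - int (bob_score x)"

lemma score_diff_snoc:
  "x \<noteq> [] \<Longrightarrow> score_diff (x @ [b]) = score_diff x + (if last x then (if b then 1 else -1) else 0)"
  by (simp add: score_diff_def alice_score_adjacent_count bob_score_adjacent_count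
      adjacent_count_snoc)

lemma finite_coin_seqs: "finite (coin_seqs n)"
  unfolding coin_seqs_def using finite_lists_length_eq[of "UNIV :: bool set" n] by simp

lemma coin_seqs_last_eq_image_snoc:
  "{x \<in> coin_seqs (Suc n). last x = b} = (\<lambda>x. x @ [b]) ` coin_seqs n"
proof (intro equalityI subsetI)
  fix x assume "x \<in> {x \<in> coin_seqs (Suc n). last x = b}"
  then have x: "length x = Suc n" "last x = b" by (auto simp: coin_seqs_def)
  then have "x \<noteq> []" by auto
  with x(2) have "x = butlast x @ [b]" using append_butlast_last_id[of x] by simp
  moreover have "butlast x \<in> coin_seqs n" using x by (simp add: coin_seqs_def)
  ultimately show "x \<in> (\<lambda>x. x @ [b]) ` coin_seqs n" by blast
qed (auto simp: coin_seqs_def)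

lemma sum_coin_seqs_split_last:
  "(\<Sum>x\<in>coin_seqs n. f x) =
     (\<Sum>x\<in>{x \<in> coin_seqs n. last x = False}. f x) + (\<Sum>x\<in>{x \<in> coin_seqs n. last x = True}. f x)"
proof -
  have "{x \<in> coin_seqs n. last x = True} = coin_seqs n \<inter> {x. last x}"
    "{x \<in> coin_seqs n. last x = False} = coin_seqs n \<inter> - {x. last x}" by auto
  then show ?thesis
    using sum.Int_Diff[of "coin_seqs n" f "{x. last x}"] finite_coin_seqs
    by (simp add: Diff_eq add.commute)
qed

definition last_coin_gf :: "complex \<Rightarrow> nat \<Rightarrow> bool \<Rightarrow> complex" where
  "last_coin_gf z k b = (\<Sum>x\<in>{x \<in> coin_seqs (Suc k). last x = b}. z powi score_diff x)"

lemma last_coin_gf_0: "last_coin_gf z 0 b = 1"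
proof -
  have "{x \<in> coin_seqs (Suc 0). last x = b} = {[b]}"
    by (auto simp: coin_seqs_def length_Suc_conv)
  moreover have "score_diff [b] = 0"
    by (simp add: score_diff_def alice_score_def bob_score_def)
  ultimately show ?thesis by (simp add: last_coin_gf_def)
qed

lemma last_coin_gf_Suc:
  assumes "z \<noteq> 0"
  shows "last_coin_gf z (Suc k) b =
    last_coin_gf z k False + (if b then z else 1 / z) * last_coin_gf z k True"
proof -
  have inj: "inj_on (\<lambda>x. x @ [b]) (coin_seqs (Suc k))" by (auto simp: inj_on_def)
  have "last_coin_gf z (Suc k) b = (\<Sum>x\<in>coin_seqs (Suc k). z powi score_diff (x @ [b]))"
    unfolding last_coin_gf_def coin_seqs_last_eq_image_snoc by (simp add: sum.reindex[OF inj])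
  also have "\<dots> = (\<Sum>x\<in>coin_seqs (Suc k).
      (if last x then (if b then z else 1 / z) else 1) * z powi score_diff x)"
  proof (intro sum.cong refl)
    fix x assume "x \<in> coin_seqs (Suc k)"
    then have "x \<noteq> []" by (auto simp: coin_seqs_def)
    then show "z powi score_diff (x @ [b]) =
        (if last x then (if b then z else 1 / z) else 1) * z powi score_diff x"
      using assms by (auto simp: score_diff_snoc power_int_add power_int_diff field_simps)
  qed
  also have "\<dots> = last_coin_gf z k False + (if b then z else 1 / z) * last_coin_gf z k True"
    by (subst sum_coin_seqs_split_last) (simp add: last_coin_gf_def sum_distrib_left)
  finally show ?thesis .
qed

lemma matpow_Amat_ones2:
  assumes "z \<noteq> 0"
  shows "matpow (Amat z) k *v ones2 = vector [last_coin_gf z k False, last_coin_gf z k True]"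
proof (induction k)
  case 0
  show ?case by (simp add: ones2_def last_coin_gf_0)
next
  case (Suc k)
  have "matpow (Amat z) (Suc k) *v ones2 = Amat z *v (matpow (Amat z) k *v ones2)"
    by (simp add: matrix_vector_mul_assoc)
  also have "\<dots> = vector [last_coin_gf z (Suc k) False, last_coin_gf z (Suc k) True]"
    unfolding Suc last_coin_gf_Suc[OF assms]
    by (simp add: Amat_def matrix_vector_mult_def vec_eq_iff forall_2 sum_2 algebra_simps)
  finally show ?case .
qed

lemma sum_matpow_Amat_ones2:
  assumes "z \<noteq> 0"
  shows "(\<Sum>i\<in>UNIV. (matpow (Amat z) k *v ones2) $ i) =
    (\<Sum>x\<in>coin_seqs (Suc k). z powi score_diff x)"
  by (simp add: matpow_Amat_ones2[OF assms] sum_2 sum_coin_seqs_split_last[of _ "Suc k"]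
      last_coin_gf_def)

lemma sum_matpow_Amat_diff_quotient:
  assumes "z \<noteq> 0"
  shows "(\<Sum>i\<in>UNIV. ((matpow (Amat z) k - matpow (Amat (1 / z)) k) *v ones2) $ i) / (1 - z) =
    (\<Sum>x\<in>coin_seqs (Suc k). (z powi score_diff x - z powi - score_diff x) / (1 - z))"
proof -
  have "(\<Sum>i\<in>UNIV. ((matpow (Amat z) k - matpow (Amat (1 / z)) k) *v ones2) $ i) =
      (\<Sum>x\<in>coin_seqs (Suc k). z powi score_diff x) -
      (\<Sum>x\<in>coin_seqs (Suc k). z powi - score_diff x)"
    using assms
    by (simp add: matrix_vector_mult_diff_rdistrib sum_subtractf sum_matpow_Amat_ones2
        power_int_one_over power_int_minus_divide)
  then show ?thesis
    by (simp only: sum_divide_distrib[symmetric] sum_subtractf)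
qed

lemma has_contour_integral_power_int:
  fixes \<gamma> :: "real \<Rightarrow> complex" and k :: int
  assumes "valid_path \<gamma>" "pathfinish \<gamma> = pathstart \<gamma>" "0 \<notin> path_image \<gamma>"
  shows "((\<lambda>z. z powi k) has_contour_integral
    (if k = -1 then 2 * pi * \<i> * winding_number \<gamma> 0 else 0)) \<gamma>"
proof (cases "k = -1")
  case True
  have "(\<lambda>z::complex. z powi k) = (\<lambda>w. 1 / (w - 0))"
    using True by (auto simp: divide_inverse)
  then show ?thesis
    using True has_contour_integral_winding_number[OF assms(1,3)] by simp
next
  case False
  then have "(of_int (k + 1) :: complex) \<noteq> 0" by (metis add_eq_0_iff2 of_int_eq_0_iff)
  have "((\<lambda>z. z powi (k + 1) / of_int (k + 1)) has_field_derivative x powi k)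
      (at x within - {0})" if "x \<in> - {0}" for x :: complex
  proof -
    have "((\<lambda>z. z powi (k + 1) / of_int (k + 1)) has_field_derivative
        of_int (k + 1) * x powi (k + 1 - 1) * 1 / of_int (k + 1)) (at x within - {0})"
      using that by (intro DERIV_cdivide DERIV_power_int DERIV_ident) auto
    with \<open>of_int (k + 1) \<noteq> 0\<close> show ?thesis by simp
  qed
  then show ?thesis
    using False assms by (auto intro: Cauchy_theorem_primitive[where S = "- {0}"])
qed

definition sym_laurent :: "nat \<Rightarrow> complex \<Rightarrow> complex" where
  "sym_laurent m z = (\<Sum>j<2 * m. z powi (int j - int m))"

lemma sym_laurent_eq:
  assumes "z \<noteq> 0" "z \<noteq> 1"
  shows "sym_laurent m z = (z powi - int m - z powi int m) / (1 - z)"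
proof -
  have "sym_laurent m z = (\<Sum>j<2 * m. z ^ j) / z ^ m"
    using assms by (simp add: sym_laurent_def power_int_diff sum_divide_distrib)
  also have "\<dots> = (1 - z ^ m * z ^ m) / (1 - z) / z ^ m"
    using assms by (simp add: sum_gp_strict mult_2 power_add)
  finally show ?thesis
    using assms by (simp add: power_int_minus field_simps)
qed

lemma has_contour_integral_sym_laurent:
  fixes \<gamma> :: "real \<Rightarrow> complex"
  assumes "valid_path \<gamma>" "pathfinish \<gamma> = pathstart \<gamma>" "0 \<notin> path_image \<gamma>"
    and "winding_number \<gamma> 0 = 1"
  shows "(sym_laurent m has_contour_integral (if m = 0 then 0 else 2 * pi * \<i>)) \<gamma>"
proof -
  have "(sym_laurent m has_contour_integral
      (\<Sum>j<2 * m. if int j - int m = -1 then 2 * pi * \<i> else 0)) \<gamma>"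
    unfolding sym_laurent_def
  proof (intro has_contour_integral_sum finite_lessThan)
    fix j
    show "((\<lambda>z. z powi (int j - int m)) has_contour_integral
        (if int j - int m = -1 then 2 * pi * \<i> else 0)) \<gamma>"
      using has_contour_integral_power_int[OF assms(1-3), of "int j - int m"] assms(4)
      by (cases "int j - int m = -1") simp_all
  qed
  moreover have "(\<Sum>j<2 * m. if int j - int m = -1 then 2 * pi * \<i> else 0) =
      (\<Sum>j<2 * m. if j = m - 1 \<and> m \<noteq> 0 then 2 * pi * \<i> else 0)"
    by (intro sum.cong) auto
  moreover have "m \<noteq> 0 \<Longrightarrow> m - Suc 0 < 2 * m" by simp
  ultimately show ?thesis by (cases "m = 0") simp_all
qed

lemma antisym_quotient_eq_sym_laurent:
  assumes "z \<noteq> 0" "z \<noteq> 1"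
  shows "(z powi e - z powi - e) / (1 - z) = of_int (- sgn e) * sym_laurent (nat \<bar>e\<bar>) z"
proof (cases "e \<ge> 0")
  case True
  then show ?thesis
    using sym_laurent_eq[OF assms, of "nat e"] by (cases "e = 0") (auto simp: field_simps)
next
  case False
  then show ?thesis using sym_laurent_eq[OF assms, of "nat (- e)"] by simp
qed

lemma has_contour_integral_antisym_quotient:
  fixes \<gamma> :: "real \<Rightarrow> complex"
  assumes "valid_path \<gamma>" "pathfinish \<gamma> = pathstart \<gamma>" "0 \<notin> path_image \<gamma>"
    and "winding_number \<gamma> 0 = 1"
  shows "((\<lambda>z. of_int (- sgn e) * sym_laurent (nat \<bar>e\<bar>) z) has_contour_integral
    2 * pi * \<i> * of_int (- sgn e)) \<gamma>"
  using has_contour_integral_lmul[OF has_contour_integral_sym_laurent[OF assms],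
      of "of_int (- sgn e)" "nat \<bar>e\<bar>"]
  by (cases "e = 0") (auto simp: mult.commute)

lemma finite_loop_free_preimage:
  assumes "loop_free \<gamma>"
  shows "finite {t \<in> {0..1}. \<gamma> t = c}"
proof (cases "\<exists>s \<in> {0..1}. \<gamma> s = c")
  case True
  then obtain s where s: "s \<in> {0..1}" "\<gamma> s = c" by blast
  have "t \<in> {s, 0, 1}" if "t \<in> {0..1}" "\<gamma> t = c" for t
  proof -
    from assms s that have "t = s \<or> t = 0 \<and> s = 1 \<or> t = 1 \<and> s = 0"
      unfolding loop_free_def by blast
    then show ?thesis by auto
  qed
  then have "{t \<in> {0..1}. \<gamma> t = c} \<subseteq> {s, 0, 1}" by blast
  then show ?thesis by (rule finite_subset) simp
next
  case False
  then have "{t \<in> {0..1}. \<gamma> t = c} = {}" by blast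
  then show ?thesis by (simp only: finite.emptyI)
qed

lemma has_contour_integral_eq_except_point:
  assumes "loop_free \<gamma>" "(g has_contour_integral I) \<gamma>"
    and "\<And>z. z \<in> path_image \<gamma> \<Longrightarrow> z \<noteq> c \<Longrightarrow> f z = g z"
  shows "(f has_contour_integral I) \<gamma>"
  using assms(2) unfolding has_contour_integral_def
proof (rule has_integral_spike_finite[OF finite_loop_free_preimage[OF assms(1), of c], rotated])
  fix t assume "t \<in> {0..1} - {t \<in> {0..1}. \<gamma> t = c}"
  then show "f (\<gamma> t) * vector_derivative \<gamma> (at t within {0..1}) =
      g (\<gamma> t) * vector_derivative \<gamma> (at t within {0..1})"
    using assms(3) by (simp add: path_image_def)
qed

lemma sum_neg_sgn_score_diff:
  "(\<Sum>x\<in>coin_seqs n. of_int (- sgn (score_diff x)) :: 'a :: ring_1) =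
   of_nat (card {x \<in> coin_seqs n. bob_score x > alice_score x}) -
   of_nat (card {x \<in> coin_seqs n. alice_score x > bob_score x})"
proof -
  have "(\<Sum>x\<in>coin_seqs n. of_int (- sgn (score_diff x))) =
      (\<Sum>x\<in>coin_seqs n. (if bob_score x > alice_score x then 1 else 0) -
        (if alice_score x > bob_score x then 1 else 0))"
    by (intro sum.cong) (auto simp: score_diff_def sgn_if)
  then show ?thesis
    by (simp add: sum_subtractf sum.inter_filter[OF finite_coin_seqs, symmetric])
qed

theorem mainTheorem2:
  fixes n :: nat and \<gamma> :: "real \<Rightarrow> complex"
  assumes "n \<ge> 1"
    and "valid_path \<gamma>" and "simple_path \<gamma>" and "pathfinish \<gamma> = pathstart \<gamma>"
    and "0 \<notin> path_image \<gamma>" and "winding_number \<gamma> 0 = 1"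
  shows "complex_of_real (Delta n) =
    (1 / 2) ^ n * (1 / (2 * pi * \<i>)) *
    contour_integral \<gamma>
      (\<lambda>z. (\<Sum>i\<in>UNIV. (((matpow (Amat z) (n - 1) - matpow (Amat (1 / z)) (n - 1)) *v ones2) $ i)) / (1 - z))"
  (is "_ = _ * contour_integral \<gamma> ?I")
proof -
  define R where "R z = (\<Sum>x\<in>coin_seqs n.
    of_int (- sgn (score_diff x)) * sym_laurent (nat \<bar>score_diff x\<bar>) z)" for z
  have R_integral: "(R has_contour_integral
      (\<Sum>x\<in>coin_seqs n. 2 * pi * \<i> * of_int (- sgn (score_diff x)))) \<gamma>"
    unfolding R_def using assms(2,4-6)
    by (intro has_contour_integral_sum finite_coin_seqs has_contour_integral_antisym_quotient)
  have I_eq_R: "?I z = R z" if "z \<in> path_image \<gamma>" "z \<noteq> 1" for z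
  proof -
    have z: "z \<noteq> 0" "z \<noteq> 1" using that assms(5) by auto
    have "Suc (n - 1) = n" using assms(1) by simp
    then have "?I z = (\<Sum>x\<in>coin_seqs n. (z powi score_diff x - z powi - score_diff x) / (1 - z))"
      using sum_matpow_Amat_diff_quotient[OF z(1), of "n - 1"] by simp
    then show ?thesis
      unfolding R_def antisym_quotient_eq_sym_laurent[OF z] .
  qed
  have "(?I has_contour_integral
      (\<Sum>x\<in>coin_seqs n. 2 * pi * \<i> * of_int (- sgn (score_diff x)))) \<gamma>"
    using assms(3) unfolding simple_path_def
    by (intro has_contour_integral_eq_except_point[OF _ R_integral I_eq_R]) simp
  then have integral: "contour_integral \<gamma> ?I =
      2 * pi * \<i> * (\<Sum>x\<in>coin_seqs n. of_int (- sgn (score_diff x)))"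
    by (simp add: contour_integral_unique sum_distrib_left)
  show ?thesis
    unfolding integral sum_neg_sgn_score_diff
    by (simp add: Delta_def P_Bob_def P_Alice_def field_simps)
qed

end
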